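(* For all $\Sigma\subseteq\mathsf{FOR}$ and $\varphi\in\mathsf{FOR}$: $\Sigma\vdash_{\mathcal{F}N}\varphi$ if and only if $\Sigma\vDash_{\mathsf{R}^n}\varphi$, where $\mathsf{R}^n$ is the set of Epstein relations $\mathfrak{R}$ such that for all $\varphi,\psi$, $\langle\neg\varphi,\psi\rangle\in\mathfrak{R}$ implies $\langle\varphi,\psi\rangle\in\mathfrak{R}$.
   Context: Language: propositional letters $\Phi=\{p_0,p_1,\dots\}$; connectives $\neg$, $\lor,\wedge,\to,\leftrightarrow,\vartriangle,\looparrowright$; $\mathsf{FOR}$ the set of all formulas. An Epstein model is $\langle v,\mathfrak{R}\rangle$ with $v:\Phi\to\{0,1\}$ and $\mathfrak{R}\subseteq\mathsf{FOR}^2$ (an Epstein relation); truth: letters via $v$, boolean connectives classical, $\langle v,\mathfrak{R}\rangle\vDash\varphi\vartriangle\psi$ iff both true and $\langle\varphi,\psi\rangle\in\mathfrak{R}$; $\langle v,\mathfrak{R}\rangle\vDash\varphi\looparrowright\psi$ iff $\varphi\to\psi$ true and $\langle\varphi,\psi\rangle\in\mathfrak{R}$. For a set $\mathsf{R}$ of relations, $\Sigma\vDash_{\mathsf{R}}\varphi$ iff for every $\mathfrak{R}\in\mathsf{R}$ and every valuation $v$, if $\langle v,\mathfrak{R}\rangle$ satisfies all of $\Sigma$ then it satisfies $\varphi$. $\mathcal{F}$ is the least set containing all classical tautologies of the language and the axioms $(p\looparrowright q)\to(p\to q)$ and $(p\vartriangle q)\leftrightarrow((p\looparrowright q)\wedge(p\wedge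 q))$, closed under uniform substitution and modus ponens. $\mathcal{F}N$ is the least set containing $\mathcal{F}$ and the axioms $(n1)\ (\neg p\looparrowright q)\to((p\looparrowright q)\lor\neg(p\to q))$ and $(n2)\ ((\neg\neg p\looparrowright q)\wedge\neg(\neg p\to q))\to(p\looparrowright q)$ ($p,q$ distinct letters), closed under uniform substitution and modus ponens. $\Sigma\vdash_{\mathcal{F}N}\varphi$ iff there is a finite sequence ending in $\varphi$ each member of which is in $\mathcal{F}N\cup\Sigma$ or follows from two earlier members by modus ponens. *)

theory Defs
  imports Main
begin

datatype form =
    Atom nat
  | Neg form
  | Or form form
  | And form form
  | Imp form form
  | Iff form form
  | Tri form form
  | Loop form form

type_synonym erel = "(form \<times> form) set"

fun sat :: "(nat \<Rightarrow> bool) \<Rightarrow> erel \<Rightarrow> form \<Rightarrow> bool" where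
  "sat v R (Atom n) = v n"
| "sat v R (Neg a) = (\<not> sat v R a)"
| "sat v R (Or a b) = (sat v R a \<or> sat v R b)"
| "sat v R (And a b) = (sat v R a \<and> sat v R b)"
| "sat v R (Imp a b) = (sat v R a \<longrightarrow> sat v R b)"
| "sat v R (Iff a b) = (sat v R a \<longleftrightarrow> sat v R b)"
| "sat v R (Tri a b) = (sat v R a \<and> sat v R b \<and> (a, b) \<in> R)"
| "sat v R (Loop a b) = ((sat v R a \<longrightarrow> sat v R b) \<and> (a, b) \<in> R)"

definition sem_conseq :: "erel set \<Rightarrow> form set \<Rightarrow> form \<Rightarrow> bool" where
  "sem_conseq Rs \<Sigma> \<phi> \<longleftrightarrow>
     (\<forall>R \<in> Rs. \<forall>v. (\<forall>\<sigma> \<in> \<Sigma>. sat v R \<sigma>) \<longrightarrow> sat v R \<phi>)"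

definition Rn :: "erel set" where
  "Rn = {R. \<forall>\<phi> \<psi>. (Neg \<phi>, \<psi>) \<in> R \<longrightarrow> (\<phi>, \<psi>) \<in> R}"

fun bval :: "(form \<Rightarrow> bool) \<Rightarrow> form \<Rightarrow> bool" where
  "bval I (Atom n) = I (Atom n)"
| "bval I (Neg a) = (\<not> bval I a)"
| "bval I (Or a b) = (bval I a \<or> bval I b)"
| "bval I (And a b) = (bval I a \<and> bval I b)"
| "bval I (Imp a b) = (bval I a \<longrightarrow> bval I b)"
| "bval I (Iff a b) = (bval I a \<longleftrightarrow> bval I b)"
| "bval I (Tri a b) = I (Tri a b)"
| "bval I (Loop a b) = I (Loop a b)"

definition tautology :: "form \<Rightarrow> bool" where
  "tautology \<phi> \<longleftrightarrow> (\<forall>I. bval I \<phi>)"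

fun subst :: "(nat \<Rightarrow> form) \<Rightarrow> form \<Rightarrow> form" where
  "subst s (Atom n) = s n"
| "subst s (Neg a) = Neg (subst s a)"
| "subst s (Or a b) = Or (subst s a) (subst s b)"
| "subst s (And a b) = And (subst s a) (subst s b)"
| "subst s (Imp a b) = Imp (subst s a) (subst s b)"
| "subst s (Iff a b) = Iff (subst s a) (subst s b)"
| "subst s (Tri a b) = Tri (subst s a) (subst s b)"
| "subst s (Loop a b) = Loop (subst s a) (subst s b)"

abbreviation p :: form where "p \<equiv> Atom 0"
abbreviation q :: form where "q \<equiv> Atom 1"

definition axF1 :: form where "axF1 = Imp (Loop p q) (Imp p q)"
definition axF2 :: form where "axF2 = Iff (Tri p q) (And (Loop p q) (And p q))"
definition axN1 :: form where "axN1 = Imp (Loop (Neg p) q) (Or (Loop p q) (Neg (Imp p q)))"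
definition axN2 :: form where
  "axN2 = Imp (And (Loop (Neg (Neg p)) q) (Neg (Imp (Neg p) q))) (Loop p q)"

inductive_set FN :: "form set" where
  taut: "tautology \<phi> \<Longrightarrow> \<phi> \<in> FN"
| F1: "axF1 \<in> FN"
| F2: "axF2 \<in> FN"
| N1: "axN1 \<in> FN"
| N2: "axN2 \<in> FN"
| US: "\<phi> \<in> FN \<Longrightarrow> subst s \<phi> \<in> FN"
| MP: "\<phi> \<in> FN \<Longrightarrow> Imp \<phi> \<psi> \<in> FN \<Longrightarrow> \<psi> \<in> FN"

definition derivable :: "form set \<Rightarrow> form \<Rightarrow> bool" where
  "derivable \<Sigma> \<phi> \<longleftrightarrow>
     (\<exists>xs. xs \<noteq> [] \<and> last xs = \<phi> \<and>
        (\<forall>i < length xs. xs ! i \<in> FN \<union> \<Sigma> \<or>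
           (\<exists>j < i. \<exists>k < i. xs ! k = Imp (xs ! j) (xs ! i))))"

end

theory Submission
  imports Defs
begin

text \<open>Soundness: the axioms of FN are valid over R^n, and R^n is closed under pulling a relation
  back along a substitution, which handles uniform substitution. Completeness: a maximal set
  \<open>G \<supseteq> \<Sigma>\<close> not deriving \<open>\<phi>\<close> is a complete, deductively closed theory. Its canonical model takes
  the valuation from \<open>G\<close> and relates \<open>a\<close> to \<open>b\<close> when \<open>a \<looparrowright> b \<in> G\<close>, enlarged on pairs that do not
  affect truth so as to satisfy the R^n condition; axioms (n1) and (n2) are exactly what makes
  this enlargement possible.\<close>

inductive derives :: "form set \<Rightarrow> form \<Rightarrow> bool" for \<Sigma> where
  axiom: "\<phi> \<in> FN \<Longrightarrow> derives \<Sigma> \<phi>"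
| assm: "\<phi> \<in> \<Sigma> \<Longrightarrow> derives \<Sigma> \<phi>"
| mp: "derives \<Sigma> a \<Longrightarrow> derives \<Sigma> (Imp a b) \<Longrightarrow> derives \<Sigma> b"

definition proof_seq :: "form set \<Rightarrow> form list \<Rightarrow> bool" where
  "proof_seq \<Sigma> xs \<longleftrightarrow> (\<forall>i < length xs. xs ! i \<in> FN \<union> \<Sigma> \<or>
     (\<exists>j < i. \<exists>k < i. xs ! k = Imp (xs ! j) (xs ! i)))"

lemma proof_seq_Nil [simp]: "proof_seq \<Sigma> []"
  by (simp add: proof_seq_def)

lemma proof_seq_snoc_iff:
  "proof_seq \<Sigma> (xs @ [b]) \<longleftrightarrow>
     proof_seq \<Sigma> xs \<and> (b \<in> FN \<union> \<Sigma> \<or> (\<exists>a \<in> set xs. Imp a b \<in> set xs))"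
proof -
  let ?ys = "xs @ [b]"
  have prefix: "?ys ! i = xs ! i" if "i < length xs" for i
    using that by (simp add: nth_append)
  have "(\<forall>i < length xs. ?ys ! i \<in> FN \<union> \<Sigma> \<or> (\<exists>j < i. \<exists>k < i. ?ys ! k = Imp (?ys ! j) (?ys ! i)))
        \<longleftrightarrow> proof_seq \<Sigma> xs"
    unfolding proof_seq_def by (auto simp: prefix)
  moreover have "(\<exists>j < length xs. \<exists>k < length xs. ?ys ! k = Imp (?ys ! j) b)
        \<longleftrightarrow> (\<exists>j < length xs. \<exists>k < length xs. xs ! k = Imp (xs ! j) b)"
    by (metis prefix)
  moreover have "\<dots> \<longleftrightarrow> (\<exists>a \<in> set xs. Imp a b \<in> set xs)"
    by (metis in_set_conv_nth)
  ultimately show ?thesis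
    unfolding proof_seq_def[of _ ?ys] by (simp add: All_less_Suc conj_commute)
qed

lemma proof_seq_append:
  assumes "proof_seq \<Sigma> xs" shows "proof_seq \<Sigma> ys \<Longrightarrow> proof_seq \<Sigma> (xs @ ys)"
proof (induction ys rule: rev_induct)
  case Nil
  then show ?case using assms by simp
next
  case (snoc y ys)
  then have "proof_seq \<Sigma> (xs @ ys)" and "y \<in> FN \<union> \<Sigma> \<or> (\<exists>a \<in> set ys. Imp a y \<in> set ys)"
    by (simp_all add: proof_seq_snoc_iff)
  then show ?case
    using proof_seq_snoc_iff[of \<Sigma> "xs @ ys" y] by auto
qed

lemma proof_seq_derives: "proof_seq \<Sigma> xs \<Longrightarrow> x \<in> set xs \<Longrightarrow> derives \<Sigma> x"
proof (induction xs arbitrary: x rule: rev_induct)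
  case (snoc y ys)
  then have "\<And>z. z \<in> set ys \<Longrightarrow> derives \<Sigma> z"
    and "y \<in> FN \<union> \<Sigma> \<or> (\<exists>a \<in> set ys. Imp a y \<in> set ys)"
    by (simp_all add: proof_seq_snoc_iff)
  then have "derives \<Sigma> y"
    by (auto intro: derives.intros)
  with snoc.prems \<open>\<And>z. z \<in> set ys \<Longrightarrow> derives \<Sigma> z\<close> show ?case
    by auto
qed simp

lemma derives_proof_seq: "derives \<Sigma> \<phi> \<Longrightarrow> \<exists>xs. proof_seq \<Sigma> (xs @ [\<phi>])"
proof (induction rule: derives.induct)
  case (axiom \<phi>)
  then show ?case
    using proof_seq_snoc_iff[of \<Sigma> "[]" \<phi>] by (auto intro!: exI[of _ "[]"])
next
  case (assm \<phi>)
  then show ?case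
    using proof_seq_snoc_iff[of \<Sigma> "[]" \<phi>] by (auto intro!: exI[of _ "[]"])
next
  case (mp a b)
  then obtain xs ys where "proof_seq \<Sigma> (xs @ [a])" "proof_seq \<Sigma> (ys @ [Imp a b])"
    by blast
  then have "proof_seq \<Sigma> ((xs @ [a]) @ (ys @ [Imp a b]))"
    by (rule proof_seq_append)
  then have "proof_seq \<Sigma> (((xs @ [a]) @ (ys @ [Imp a b])) @ [b])"
    by (simp only: proof_seq_snoc_iff) simp
  then show ?case ..
qed

lemma derivable_iff_derives: "derivable \<Sigma> \<phi> \<longleftrightarrow> derives \<Sigma> \<phi>"
proof -
  have "derivable \<Sigma> \<phi> \<longleftrightarrow> (\<exists>xs. xs \<noteq> [] \<and> last xs = \<phi> \<and> proof_seq \<Sigma> xs)"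
    unfolding derivable_def proof_seq_def ..
  also have "\<dots> \<longleftrightarrow> (\<exists>xs. proof_seq \<Sigma> (xs @ [\<phi>]))"
    by (metis snoc_eq_iff_butlast)
  also have "\<dots> \<longleftrightarrow> derives \<Sigma> \<phi>"
    using derives_proof_seq proof_seq_derives by fastforce
  finally show ?thesis .
qed

section \<open>Soundness\<close>

lemma sat_subst:
  "sat v R (subst s \<phi>) \<longleftrightarrow> sat (\<lambda>n. sat v R (s n)) {(a, b). (subst s a, subst s b) \<in> R} \<phi>"
  by (induction \<phi>) auto

lemma bval_sat: "bval (sat v R) \<phi> \<longleftrightarrow> sat v R \<phi>"
  by (induction \<phi>) auto

lemma FN_sound: "\<phi> \<in> FN \<Longrightarrow> R \<in> Rn \<Longrightarrow> sat v R \<phi>"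
proof (induction arbitrary: v R rule: FN.induct)
  case (taut \<phi>)
  then show ?case by (metis bval_sat tautology_def)
next
  case (US \<phi> s)
  have "{(a, b). (subst s a, subst s b) \<in> R} \<in> Rn"
    using US.prems by (auto simp: Rn_def)
  then show ?case
    using US.IH by (simp add: sat_subst)
qed (auto simp: axF1_def axF2_def axN1_def axN2_def Rn_def)

lemma derives_sat:
  "derives \<Sigma> \<phi> \<Longrightarrow> R \<in> Rn \<Longrightarrow> \<forall>\<sigma> \<in> \<Sigma>. sat v R \<sigma> \<Longrightarrow> sat v R \<phi>"
  by (induction rule: derives.induct) (auto simp: FN_sound)

theorem derives_sound: "derives \<Sigma> \<phi> \<Longrightarrow> sem_conseq Rn \<Sigma> \<phi>"
  unfolding sem_conseq_def using derives_sat by blast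

lemma derives_mono: "derives \<Sigma> \<phi> \<Longrightarrow> \<Sigma> \<subseteq> \<Gamma> \<Longrightarrow> derives \<Gamma> \<phi>"
  by (induction rule: derives.induct) (auto intro: derives.intros)

lemma derives_finite_subset:
  "derives \<Sigma> \<phi> \<Longrightarrow> \<exists>\<Sigma>0. finite \<Sigma>0 \<and> \<Sigma>0 \<subseteq> \<Sigma> \<and> derives \<Sigma>0 \<phi>"
proof (induction rule: derives.induct)
  case (axiom \<phi>)
  then show ?case by (auto intro: derives.axiom)
next
  case (assm \<phi>)
  then show ?case by (auto intro!: exI[of _ "{\<phi>}"] derives.assm)
next
  case (mp a b)
  then obtain \<Sigma>1 \<Sigma>2 where "finite \<Sigma>1" "\<Sigma>1 \<subseteq> \<Sigma>" "derives \<Sigma>1 a"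
    and "finite \<Sigma>2" "\<Sigma>2 \<subseteq> \<Sigma>" "derives \<Sigma>2 (Imp a b)"
    by blast
  then show ?case
    by (intro exI[of _ "\<Sigma>1 \<union> \<Sigma>2"]) (meson derives.mp derives_mono finite_UnI le_supI sup_ge1 sup_ge2)
qed

lemma derives_foldr_Imp:
  "derives \<Sigma> (foldr Imp hs c) \<Longrightarrow> \<forall>h \<in> set hs. derives \<Sigma> h \<Longrightarrow> derives \<Sigma> c"
  by (induction hs) (auto intro: derives.mp)

lemma derives_tautological_consequence:
  "tautology (foldr Imp hs c) \<Longrightarrow> \<forall>h \<in> set hs. derives \<Sigma> h \<Longrightarrow> derives \<Sigma> c"
  by (blast intro: derives_foldr_Imp derives.axiom FN.taut)

lemma deduction_theorem: "derives (insert a \<Sigma>) b \<Longrightarrow> derives \<Sigma> (Imp a b)"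
proof (induction rule: derives.induct)
  case (axiom \<phi>)
  then show ?case
    by (intro derives_tautological_consequence[of "[\<phi>]"])
       (auto simp: tautology_def intro: derives.axiom)
next
  case (assm \<phi>)
  show ?case
  proof (cases "\<phi> = a")
    case True
    then show ?thesis
      by (intro derives_tautological_consequence[of "[]"]) (auto simp: tautology_def)
  next
    case False
    with assm show ?thesis
      by (intro derives_tautological_consequence[of "[\<phi>]"])
         (auto simp: tautology_def intro: derives.assm)
  qed
next
  case (mp c d)
  then show ?case
    by (intro derives_tautological_consequence[of "[Imp a (Imp c d), Imp a c]"])
       (auto simp: tautology_def)
qed

lemma axF1_instance: "Imp (Loop a b) (Imp a b) \<in> FN"
  using FN.US[OF FN.F1, of "case_nat a (\<lambda>_. b)"] by (simp add: axF1_def)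

lemma axF2_instance: "Iff (Tri a b) (And (Loop a b) (And a b)) \<in> FN"
  using FN.US[OF FN.F2, of "case_nat a (\<lambda>_. b)"] by (simp add: axF2_def)

lemma axN1_instance: "Imp (Loop (Neg a) b) (Or (Loop a b) (Neg (Imp a b))) \<in> FN"
  using FN.US[OF FN.N1, of "case_nat a (\<lambda>_. b)"] by (simp add: axN1_def)

lemma axN2_instance: "Imp (And (Loop (Neg (Neg a)) b) (Neg (Imp (Neg a) b))) (Loop a b) \<in> FN"
  using FN.US[OF FN.N2, of "case_nat a (\<lambda>_. b)"] by (simp add: axN2_def)

section \<open>Complete theories and the canonical model\<close>

locale complete_theory =
  fixes G :: "form set"
  assumes deductively_closed: "derives G \<psi> \<Longrightarrow> \<psi> \<in> G"
    and Neg_mem_iff: "Neg \<psi> \<in> G \<longleftrightarrow> \<psi> \<notin> G"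
begin

lemma tautological_consequence_mem:
  "tautology (foldr Imp hs c) \<Longrightarrow> set hs \<subseteq> G \<Longrightarrow> c \<in> G"
  by (blast intro: deductively_closed derives_tautological_consequence derives.assm)

lemma FN_mem: "\<phi> \<in> FN \<Longrightarrow> \<phi> \<in> G"
  by (blast intro: deductively_closed derives.axiom)

lemma Imp_mem_iff: "Imp x y \<in> G \<longleftrightarrow> (x \<in> G \<longrightarrow> y \<in> G)"
proof
  show "x \<in> G \<longrightarrow> y \<in> G" if "Imp x y \<in> G"
    using that tautological_consequence_mem[of "[Imp x y, x]" y] by (simp add: tautology_def)
next
  assume "x \<in> G \<longrightarrow> y \<in> G"
  then consider "y \<in> G" | "Neg x \<in> G"
    using Neg_mem_iff by blast
  then show "Imp x y \<in> G"
  proof cases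
    case 1
    then show ?thesis
      using tautological_consequence_mem[of "[y]" "Imp x y"] by (simp add: tautology_def)
  next
    case 2
    then show ?thesis
      using tautological_consequence_mem[of "[Neg x]" "Imp x y"] by (simp add: tautology_def)
  qed
qed

lemma Or_mem_iff: "Or x y \<in> G \<longleftrightarrow> (x \<in> G \<or> y \<in> G)"
proof
  show "x \<in> G \<or> y \<in> G" if "Or x y \<in> G"
    using that tautological_consequence_mem[of "[Or x y, Neg x]" y] Neg_mem_iff[of x]
    by (auto simp: tautology_def)
next
  show "Or x y \<in> G" if "x \<in> G \<or> y \<in> G"
    using that tautological_consequence_mem[of "[x]" "Or x y"]
      tautological_consequence_mem[of "[y]" "Or x y"]
    by (auto simp: tautology_def)
qed

lemma And_mem_iff: "And x y \<in> G \<longleftrightarrow> (x \<in> G \<and> y \<in> G)"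
proof
  show "x \<in> G \<and> y \<in> G" if "And x y \<in> G"
    using that tautological_consequence_mem[of "[And x y]" x]
      tautological_consequence_mem[of "[And x y]" y]
    by (simp add: tautology_def)
next
  show "And x y \<in> G" if "x \<in> G \<and> y \<in> G"
    using that tautological_consequence_mem[of "[x, y]" "And x y"]
    by (simp add: tautology_def)
qed

lemma Iff_mem_iff: "Iff x y \<in> G \<longleftrightarrow> (x \<in> G \<longleftrightarrow> y \<in> G)"
proof
  assume "Iff x y \<in> G"
  then have "Imp x y \<in> G" "Imp y x \<in> G"
    using tautological_consequence_mem[of "[Iff x y]" "Imp x y"]
      tautological_consequence_mem[of "[Iff x y]" "Imp y x"]
    by (simp_all add: tautology_def)
  then show "x \<in> G \<longleftrightarrow> y \<in> G"
    unfolding Imp_mem_iff by blast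
next
  assume "x \<in> G \<longleftrightarrow> y \<in> G"
  then have "Imp x y \<in> G" "Imp y x \<in> G"
    unfolding Imp_mem_iff by blast+
  then show "Iff x y \<in> G"
    using tautological_consequence_mem[of "[Imp x y, Imp y x]" "Iff x y"]
    by (auto simp: tautology_def)
qed

definition canonical_val :: "nat \<Rightarrow> bool" where
  "canonical_val n \<longleftrightarrow> Atom n \<in> G"

text \<open>The second disjunct only adds pairs \<open>(a, b)\<close> with \<open>a \<rightarrow> b \<notin> G\<close>, on which the relation
  does not affect truth; they are needed to close the relation under the R^n condition.\<close>
definition canonical_rel :: erel where
  "canonical_rel = {(a, b). Loop a b \<in> G \<or> (Imp a b \<notin> G \<and> Loop (Neg a) b \<in> G)}"

lemma canonical_rel_Rn: "canonical_rel \<in> Rn"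
  unfolding Rn_def
proof (intro CollectI allI impI)
  fix a b assume "(Neg a, b) \<in> canonical_rel"
  then consider "Loop (Neg a) b \<in> G" | "Imp (Neg a) b \<notin> G" "Loop (Neg (Neg a)) b \<in> G"
    unfolding canonical_rel_def by blast
  then show "(a, b) \<in> canonical_rel"
  proof cases
    case 1
    then have "Loop a b \<in> G \<or> Imp a b \<notin> G"
      using FN_mem[OF axN1_instance[of a b]] by (simp add: Imp_mem_iff Or_mem_iff Neg_mem_iff)
    with 1 show ?thesis
      unfolding canonical_rel_def by auto
  next
    case 2
    then have "Loop a b \<in> G"
      using FN_mem[OF axN2_instance[of a b]] by (simp add: Imp_mem_iff And_mem_iff Neg_mem_iff)
    then show ?thesis
      unfolding canonical_rel_def by blast
  qed
qed

lemma canonical_rel_iff: "Imp a b \<in> G \<Longrightarrow> (a, b) \<in> canonical_rel \<longleftrightarrow> Loop a b \<in> G"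
  unfolding canonical_rel_def by blast

lemma Loop_mem_imp: "Loop a b \<in> G \<Longrightarrow> Imp a b \<in> G"
  using FN_mem[OF axF1_instance[of a b]] by (simp add: Imp_mem_iff)

lemma Tri_mem_iff: "Tri a b \<in> G \<longleftrightarrow> Loop a b \<in> G \<and> a \<in> G \<and> b \<in> G"
  using FN_mem[OF axF2_instance[of a b]] by (simp add: Iff_mem_iff And_mem_iff)

lemma canonical_sat_iff: "sat canonical_val canonical_rel \<psi> \<longleftrightarrow> \<psi> \<in> G"
proof (induction \<psi>)
  case (Tri a b)
  show ?case
  proof (cases "b \<in> G")
    case True
    then have "(a, b) \<in> canonical_rel \<longleftrightarrow> Loop a b \<in> G"
      by (intro canonical_rel_iff) (simp add: Imp_mem_iff)
    with True Tri.IH show ?thesis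
      by (auto simp: Tri_mem_iff)
  next
    case False
    with Tri.IH show ?thesis
      by (simp add: Tri_mem_iff)
  qed
next
  case (Loop a b)
  show ?case
  proof (cases "Imp a b \<in> G")
    case True
    with Loop.IH show ?thesis
      using canonical_rel_iff[OF True] Imp_mem_iff[of a b] by simp
  next
    case False
    with Loop.IH show ?thesis
      using Loop_mem_imp[of a b] Imp_mem_iff[of a b] by auto
  qed
qed (simp_all add: canonical_val_def Neg_mem_iff Or_mem_iff And_mem_iff Imp_mem_iff Iff_mem_iff)

end

section \<open>Completeness\<close>

lemma maximal_nonderiving_exists:
  assumes "\<not> derives \<Sigma> \<phi>"
  shows "\<exists>G \<in> {G. \<Sigma> \<subseteq> G \<and> \<not> derives G \<phi>}.
           \<forall>X \<in> {G. \<Sigma> \<subseteq> G \<and> \<not> derives G \<phi>}. G \<subseteq> X \<longrightarrow> X = G"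
proof (rule subset_Zorn_nonempty)
  show "{G. \<Sigma> \<subseteq> G \<and> \<not> derives G \<phi>} \<noteq> {}"
    using assms by blast
next
  fix C assume C: "C \<noteq> {}" "subset.chain {G. \<Sigma> \<subseteq> G \<and> \<not> derives G \<phi>} C"
  have "\<not> derives (\<Union>C) \<phi>"
  proof
    assume "derives (\<Union>C) \<phi>"
    then obtain \<Sigma>0 where "finite \<Sigma>0" "\<Sigma>0 \<subseteq> \<Union>C" "derives \<Sigma>0 \<phi>"
      using derives_finite_subset by blast
    moreover obtain B where "B \<in> C" "\<Sigma>0 \<subseteq> B"
      using finite_subset_Union_chain[OF \<open>finite \<Sigma>0\<close> \<open>\<Sigma>0 \<subseteq> \<Union>C\<close> C(1,2)] by blast
    ultimately have "derives B \<phi>"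
      using derives_mono by blast
    moreover have "\<not> derives B \<phi>"
      using C(2) \<open>B \<in> C\<close> unfolding subset.chain_def by blast
    ultimately show False
      by contradiction
  qed
  moreover have "\<Sigma> \<subseteq> \<Union>C"
    using C unfolding subset.chain_def by blast
  ultimately show "\<Union>C \<in> {G. \<Sigma> \<subseteq> G \<and> \<not> derives G \<phi>}"
    by blast
qed

lemma maximal_nonderiving_complete_theory:
  assumes nonderiving: "\<not> derives G \<phi>"
    and maximal: "\<And>\<psi>. \<psi> \<notin> G \<Longrightarrow> derives (insert \<psi> G) \<phi>"
  shows "complete_theory G"
proof (rule complete_theory.intro)
  have Imp_goal: "\<psi> \<notin> G \<Longrightarrow> derives G (Imp \<psi> \<phi>)" for \<psi>
    using maximal deduction_theorem by blast
  show closed: "\<psi> \<in> G" if "derives G \<psi>" for \<psi>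
    using that nonderiving Imp_goal derives.mp by blast
  show "Neg \<psi> \<in> G \<longleftrightarrow> \<psi> \<notin> G" for \<psi>
  proof
    assume "Neg \<psi> \<in> G"
    show "\<psi> \<notin> G"
    proof
      assume "\<psi> \<in> G"
      with \<open>Neg \<psi> \<in> G\<close> have "derives G \<phi>"
        by (intro derives_tautological_consequence[of "[\<psi>, Neg \<psi>]"])
           (auto simp: tautology_def intro: derives.assm)
      with nonderiving show False ..
    qed
  next
    assume "\<psi> \<notin> G"
    show "Neg \<psi> \<in> G"
    proof (rule ccontr)
      assume "Neg \<psi> \<notin> G"
      with \<open>\<psi> \<notin> G\<close> have "derives G \<phi>"
        by (intro derives_tautological_consequence[of "[Imp \<psi> \<phi>, Imp (Neg \<psi>) \<phi>]"])
           (auto simp: tautology_def Imp_goal)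
      with nonderiving show False ..
    qed
  qed
qed

lemma lindenbaum:
  assumes "\<not> derives \<Sigma> \<phi>"
  obtains G where "\<Sigma> \<subseteq> G" "complete_theory G" "\<phi> \<notin> G"
proof -
  let ?A = "{G. \<Sigma> \<subseteq> G \<and> \<not> derives G \<phi>}"
  obtain G where "G \<in> ?A" and max: "\<forall>X \<in> ?A. G \<subseteq> X \<longrightarrow> X = G"
    using maximal_nonderiving_exists[OF assms] ..
  then have G: "\<Sigma> \<subseteq> G" "\<not> derives G \<phi>"
    by simp_all
  have "derives (insert \<psi> G) \<phi>" if "\<psi> \<notin> G" for \<psi>
  proof (rule ccontr)
    assume "\<not> derives (insert \<psi> G) \<phi>"
    with G(1) have "insert \<psi> G \<in> ?A"
      by blast
    with max have "insert \<psi> G = G"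
      by blast
    with that show False
      by blast
  qed
  then have "complete_theory G"
    by (rule maximal_nonderiving_complete_theory[OF G(2)])
  moreover have "\<phi> \<notin> G"
    using G(2) derives.assm by blast
  ultimately show thesis
    by (rule that[OF G(1)])
qed

theorem derives_complete: "sem_conseq Rn \<Sigma> \<phi> \<Longrightarrow> derives \<Sigma> \<phi>"
proof (rule ccontr)
  assume "sem_conseq Rn \<Sigma> \<phi>" "\<not> derives \<Sigma> \<phi>"
  then obtain G where "\<Sigma> \<subseteq> G" "complete_theory G" "\<phi> \<notin> G"
    using lindenbaum by blast
  then interpret complete_theory G by simp
  have "\<forall>\<sigma> \<in> \<Sigma>. sat canonical_val canonical_rel \<sigma>"
    using \<open>\<Sigma> \<subseteq> G\<close> by (auto simp: canonical_sat_iff)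
  then have "sat canonical_val canonical_rel \<phi>"
    using \<open>sem_conseq Rn \<Sigma> \<phi>\<close> canonical_rel_Rn unfolding sem_conseq_def by blast
  with \<open>\<phi> \<notin> G\<close> show False
    by (simp add: canonical_sat_iff)
qed

theorem mainTheorem17:
  fixes \<Sigma> :: "form set" and \<phi> :: form
  shows "derivable \<Sigma> \<phi> \<longleftrightarrow> sem_conseq Rn \<Sigma> \<phi>"
  unfolding derivable_iff_derives using derives_sound derives_complete by blast

end
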